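(* Let $n,m\ge0$ be integers, $d_1,\ldots,d_m,s$ positive integers, $g_\bullet=|n;d_1,\ldots,d_m|$ and $h_\bullet=|n;d_1,\ldots,d_m,s|$. Suppose $g_\bullet$ is unimodal at each tail. If there is a positive integer $i$ with $h_i\le h_{i-1}$, then $h_d\le h_{d-1}$ for all $d\ge i$; in this case, if $n\ge1$, then $h^{(1)}_\bullet=|n-1;d_1,\ldots,d_m,s|$.
   Context: For $P=\sum p_iz^i\in\mathbb{Z}[[z]]$ let $t=\min\{d:p_d\le0\}$ and $|P|=\sum q_iz^i$ with $q_i=p_i$ for $i<t$, $q_i=0$ for $i\ge t$. The Fröberg sequence $|n;d_1,\ldots,d_m|$ is the sequence $(h_0,h_1,\ldots)$ with $\sum h_iz^i=\left|\prod_{j=1}^m(1-z^{d_j})/(1-z)^n\right|$. For a sequence $h_\bullet$ of nonnegative integers with $h_0=1$: $h^{(0)}_\bullet=h_\bullet$; $h^{(i)}_0=1$ and $h^{(i)}_d=\max\{0,h^{(i-1)}_d-h^{(i-1)}_{d-1}\}$ for $d\ge1$ (in particular $h^{(1)}$ is given by this formula with $i=1$; in the definition of unimodality below it is used for $1\le i<h_1$). For $0\le i<\max\{1,h_1\}$, $r_i=\min\{d\ge1:h^{(i)}_d\le h^{(i)}_{d-1}\}$ ($\infty$ if none), $D(h_\bullet)=\min\{i:r_i<\infty\}$. The sequence is unimodal at each tail if for every $i$ with $D(h_\bullet)\le i<\max\{1,h_1\}$, $h^{(i)}_d\le h^{(i)}_{d-1}$ for all $d\ge r_i$. *)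

theory Defs
  imports "HOL-Computational_Algebra.Formal_Power_Series" "HOL-Library.Extended_Nat"
begin

text \<open>The power series prod_j (1 - z^(d_j)) / (1 - z)^n, computed in Q[[z]]
  (its coefficients are integers, since (1-z)^n is a unit of Z[[z]]).\<close>
definition froberg_series :: "nat \<Rightarrow> nat list \<Rightarrow> rat fps" where
  "froberg_series n ds = (\<Prod>d\<leftarrow>ds. 1 - fps_X ^ d) * inverse ((1 - fps_X) ^ n)"

text \<open>Truncation |P|: q_i = p_i for i < t, 0 otherwise, where t = min{d. p_d \<le> 0}
  (t = infinity if no such d).  Note i < t iff p_j > 0 for all j \<le> i.\<close>
definition trunc_seq :: "(nat \<Rightarrow> 'a::linordered_idom) \<Rightarrow> nat \<Rightarrow> 'a" where
  "trunc_seq p i = (if \<forall>j\<le>i. p j > 0 then p i else 0)"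

definition froberg :: "nat \<Rightarrow> nat list \<Rightarrow> nat \<Rightarrow> rat" where
  "froberg n ds = trunc_seq (\<lambda>i. fps_nth (froberg_series n ds) i)"

fun hder :: "(nat \<Rightarrow> 'a::linordered_idom) \<Rightarrow> nat \<Rightarrow> nat \<Rightarrow> 'a" where
  "hder h 0 = h"
| "hder h (Suc i) = (\<lambda>d. if d = 0 then 1 else max 0 (hder h i d - hder h i (d - 1)))"

definition rseq :: "(nat \<Rightarrow> 'a::linordered_idom) \<Rightarrow> nat \<Rightarrow> enat" where
  "rseq h i = (if \<exists>d\<ge>1. hder h i d \<le> hder h i (d - 1)
               then enat (LEAST d. d \<ge> 1 \<and> hder h i d \<le> hder h i (d - 1)) else \<infinity>)"

definition Dseq :: "(nat \<Rightarrow> 'a::linordered_idom) \<Rightarrow> enat" where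
  "Dseq h = (if \<exists>i. of_nat i < max 1 (h 1) \<and> rseq h i < \<infinity>
             then enat (LEAST i. of_nat i < max 1 (h 1) \<and> rseq h i < \<infinity>) else \<infinity>)"

definition unimodal_each_tail :: "(nat \<Rightarrow> 'a::linordered_idom) \<Rightarrow> bool" where
  "unimodal_each_tail h \<longleftrightarrow>
     (\<forall>i. Dseq h \<le> enat i \<and> of_nat i < max 1 (h 1) \<longrightarrow>
          (\<forall>d. rseq h i \<le> enat d \<longrightarrow> hder h i d \<le> hder h i (d - 1)))"

end

theory Submission
  imports Defs
begin

text \<open>Let G be the series of g = |n; d_1, ..., d_m| and F = (1 - z) G, so that the first
  difference of (1 - z^s) G is F_d - F_(d-s).  As long as h is not truncated, g = G there, and
  a drop h_d <= h_(d-1) means F_d <= F_(d-s).  If F_d <= 0, then F_(d-s) <= 0 would make g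
  nonincreasing from d - s on (unimodality of g), forcing h_d = g_d - g_(d-s) <= 0.  If F_d > 0,
  then F > 0 on [1, d] for the same reason, so F agrees there with g^(1), which is nonincreasing
  after its first drop; for such a sequence F_i <= F_(i-s) propagates to every d >= i.  The
  second claim follows from the first: h^(1) is the first difference of h, which is truncated
  exactly where it stops being positive.\<close>

unbundle fps_syntax

definition shift_diff :: "nat \<Rightarrow> (nat \<Rightarrow> 'a::ab_group_add) \<Rightarrow> nat \<Rightarrow> 'a" where
  "shift_diff s g k = g k - (if s \<le> k then g (k - s) else 0)"

lemma fps_nth_one_minus_X_power_mult:
  fixes f :: "'a::comm_ring_1 fps"
  shows "((1 - fps_X ^ s) * f) $ k = shift_diff s (fps_nth f) k"
proof -
  have "(1 - fps_X ^ s) * f = f - fps_X ^ s * f" by (simp add: left_diff_distrib)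
  then show ?thesis by (simp add: shift_diff_def fps_X_power_mult_nth)
qed

lemma shift_diff_cong:
  "(\<And>j. j \<le> k \<Longrightarrow> g j = g' j) \<Longrightarrow> shift_diff s g k = shift_diff s g' k"
  by (simp add: shift_diff_def)

lemma shift_diff_commute:
  "shift_diff s (shift_diff t g) k = shift_diff t (shift_diff s g) k"
  unfolding shift_diff_def by (auto simp: algebra_simps diff_commute)

lemma pos_of_shift_diff_pos:
  fixes g :: "nat \<Rightarrow> 'a::linordered_idom"
  assumes "0 < s" and pos: "\<forall>j\<le>d. 0 < shift_diff s g j" and "j \<le> d"
  shows "0 < g j"
  using \<open>j \<le> d\<close>
proof (induction j rule: less_induct)
  case (less j)
  show ?case
  proof (cases "s \<le> j")
    case True
    with less \<open>0 < s\<close> have "0 < g (j - s)" by simp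
    moreover have "0 < g j - g (j - s)" using pos less.prems True by (auto simp: shift_diff_def)
    ultimately show ?thesis by simp
  next
    case False
    with pos less.prems show ?thesis by (auto simp: shift_diff_def)
  qed
qed

lemma trunc_seq_nonneg: "0 \<le> trunc_seq p k"
  by (simp add: trunc_seq_def less_imp_le)

lemma trunc_seq_eq: "\<forall>j\<le>k. 0 < p j \<Longrightarrow> trunc_seq p k = p k"
  by (simp add: trunc_seq_def)

lemma trunc_seq_eq_0: "\<not> (\<forall>j\<le>k. 0 < p j) \<Longrightarrow> trunc_seq p k = 0"
  unfolding trunc_seq_def by auto

lemma trunc_seq_drop:
  assumes "0 < j" and "p j \<le> p (j - 1)"
  shows "trunc_seq p j \<le> trunc_seq p (j - 1)"
proof (cases "\<forall>q\<le>j. 0 < p q")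
  case True
  then show ?thesis using assms by (simp add: trunc_seq_eq)
qed (simp add: trunc_seq_eq_0 trunc_seq_nonneg)

lemma mono_steps_le:
  fixes f :: "nat \<Rightarrow> 'a::linorder"
  assumes "a \<le> b" and "\<And>k. a < k \<Longrightarrow> k \<le> b \<Longrightarrow> f (k - 1) \<le> f k"
  shows "f a \<le> f b"
  using \<open>a \<le> b\<close>
proof (induction b rule: dec_induct)
  case (step k)
  then show ?case using assms(2)[of "Suc k"] by simp
qed simp

lemma antimono_steps_le:
  fixes f :: "nat \<Rightarrow> 'a::linorder"
  assumes "a \<le> b" and "\<And>k. a < k \<Longrightarrow> k \<le> b \<Longrightarrow> f k \<le> f (k - 1)"
  shows "f b \<le> f a"
  using \<open>a \<le> b\<close>
proof (induction b rule: dec_induct)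
  case (step k)
  then show ?case using assms(2)[of "Suc k"] by simp
qed simp

lemma mono_steps_less:
  fixes f :: "nat \<Rightarrow> 'a::linorder"
  assumes "a < b" and steps: "\<And>k. a < k \<Longrightarrow> k \<le> b \<Longrightarrow> f (k - 1) < f k"
  shows "f a < f b"
proof -
  have "f a \<le> f (b - 1)"
    by (rule mono_steps_le[of _ _ f]) (use \<open>a < b\<close> steps in \<open>auto intro: less_imp_le\<close>)
  also have "\<dots> < f b" using steps \<open>a < b\<close> by simp
  finally show ?thesis .
qed

definition nonincreasing_after_drop :: "(nat \<Rightarrow> 'a::linorder) \<Rightarrow> bool" where
  "nonincreasing_after_drop h \<longleftrightarrow>
     (\<forall>a b. 0 < a \<longrightarrow> a \<le> b \<longrightarrow> h a \<le> h (a - 1) \<longrightarrow> h b \<le> h (b - 1))"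

lemma unimodal_each_tail_nonincreasing_after_drop:
  assumes unimodal: "unimodal_each_tail h" and i: "of_nat i < max 1 (h 1)"
  shows "nonincreasing_after_drop (hder h i)"
  unfolding nonincreasing_after_drop_def
proof (intro allI impI)
  fix a b
  assume a: "0 < a" "a \<le> b" "hder h i a \<le> hder h i (a - 1)"
  define r where "r = (LEAST d. d \<ge> 1 \<and> hder h i d \<le> hder h i (d - 1))"
  have rseq: "rseq h i = enat r"
    using a unfolding rseq_def r_def by (auto intro: exI[of _ a])
  have "r \<le> a" unfolding r_def by (rule Least_le) (use a in simp)
  have "(LEAST i'. of_nat i' < max 1 (h 1) \<and> rseq h i' < \<infinity>) \<le> i"
    by (rule Least_le) (use i rseq in simp)
  then have "Dseq h \<le> enat i" using i rseq unfolding Dseq_def by auto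
  moreover have "rseq h i \<le> enat b" using rseq \<open>r \<le> a\<close> a by simp
  ultimately show "hder h i b \<le> hder h i (b - 1)"
    using unimodal i unfolding unimodal_each_tail_def by blast
qed

lemma nonincreasing_after_dropD:
  "nonincreasing_after_drop h \<Longrightarrow> 0 < a \<Longrightarrow> a \<le> b \<Longrightarrow> h a \<le> h (a - 1) \<Longrightarrow> h b \<le> h (b - 1)"
  unfolding nonincreasing_after_drop_def by blast

lemma nonincreasing_after_drop_le:
  assumes "nonincreasing_after_drop h" "0 < a" "a \<le> b" "h a \<le> h (a - 1)"
  shows "h b \<le> h a"
proof (rule antimono_steps_le[of a b h])
  show "h k \<le> h (k - 1)" if "a < k" "k \<le> b" for k
    using nonincreasing_after_dropD[OF assms(1,2) _ assms(4), of k] that by simp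
qed (fact assms(3))

lemma peak_shift_le:
  fixes \<phi> :: "nat \<Rightarrow> 'a::linorder"
  assumes up: "\<And>k. 0 < k \<Longrightarrow> k < r \<Longrightarrow> \<phi> (k - 1) \<le> \<phi> k"
    and down: "\<And>k. r \<le> k \<Longrightarrow> \<phi> k \<le> \<phi> (k - 1)"
    and "r \<le> i" "i \<le> d" "\<phi> i \<le> \<phi> (i - s)"
  shows "\<phi> d \<le> \<phi> (d - s)"
proof (cases "r \<le> Suc (d - s)")
  case True
  show ?thesis by (rule antimono_steps_le[of _ _ \<phi>]) (use True down in auto)
next
  case False
  have "\<phi> d \<le> \<phi> i" by (rule antimono_steps_le[of _ _ \<phi>]) (use assms down in auto)
  also have "\<dots> \<le> \<phi> (i - s)" by fact
  also have "\<dots> \<le> \<phi> (d - s)" by (rule mono_steps_le[of _ _ \<phi>]) (use False \<open>i \<le> d\<close> up in auto)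
  finally show ?thesis .
qed

lemma nonincreasing_after_drop_shift_le:
  fixes \<phi> :: "nat \<Rightarrow> 'a::linorder"
  assumes \<phi>: "nonincreasing_after_drop \<phi>" and "0 < i" "i \<le> d" "\<phi> i \<le> \<phi> (i - s)"
  shows "\<phi> d \<le> \<phi> (d - s)"
proof (cases "s = 0")
  case False
  let ?drop = "\<lambda>a. 0 < a \<and> \<phi> a \<le> \<phi> (a - 1)"
  have "\<exists>a\<le>i. ?drop a"
  proof (rule ccontr)
    assume "\<not> (\<exists>a\<le>i. ?drop a)"
    then have "\<phi> (k - 1) < \<phi> k" if "i - s < k" "k \<le> i" for k
      using that by (metis not_le zero_less_iff_neq_zero less_nat_zero_code)
    moreover have "i - s < i" using \<open>0 < i\<close> False by simp
    ultimately have "\<phi> (i - s) < \<phi> i" using mono_steps_less[of "i - s" i \<phi>] by blast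
    with \<open>\<phi> i \<le> \<phi> (i - s)\<close> show False by simp
  qed
  then obtain a where a: "a \<le> i" "?drop a" by blast
  then obtain r where r: "?drop r" and first: "\<And>k. k < r \<Longrightarrow> \<not> ?drop k"
    using exists_least_iff[of ?drop] by blast
  have "r \<le> i" using first[of a] a by (meson not_le order.trans)
  show ?thesis
  proof (rule peak_shift_le)
    show "\<phi> (k - 1) \<le> \<phi> k" if "0 < k" "k < r" for k using first[OF \<open>k < r\<close>] that by simp
    show "\<phi> k \<le> \<phi> (k - 1)" if "r \<le> k" for k using nonincreasing_after_dropD[OF \<phi>] r that by blast
  qed (use r \<open>r \<le> i\<close> assms in auto)
qed simp

lemma shift_diff_first_diff_nonpos_at_fall:
  fixes g :: "nat \<Rightarrow> 'a::linordered_idom"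
  assumes g: "nonincreasing_after_drop g" and "0 < g 0"
    and "0 < shift_diff s g d" and fall: "shift_diff 1 g d \<le> 0"
  shows "shift_diff s (shift_diff 1 g) d \<le> 0"
proof (cases "s \<le> d")
  case True
  have "0 < shift_diff 1 g (d - s)"
  proof (rule ccontr)
    assume nonpos: "\<not> 0 < shift_diff 1 g (d - s)"
    with \<open>0 < g 0\<close> have "0 < d - s" by (cases "s < d") (auto simp: shift_diff_def)
    with nonpos have "g (d - s) \<le> g (d - s - 1)" by (simp add: shift_diff_def)
    then have "g d \<le> g (d - s)"
      using nonincreasing_after_drop_le[OF g \<open>0 < d - s\<close>] True by simp
    with True \<open>0 < shift_diff s g d\<close> show False by (simp add: shift_diff_def)
  qed
  with True fall show ?thesis by (simp add: shift_diff_def)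
qed (use fall in \<open>simp add: shift_diff_def\<close>)

lemma shift_diff_first_diff_nonpos_at_rise:
  fixes g :: "nat \<Rightarrow> 'a::linordered_idom"
  assumes g: "nonincreasing_after_drop g" and g1: "1 < g 1 \<Longrightarrow> nonincreasing_after_drop (hder g 1)"
    and "g 0 = 1" "0 < i" "i \<le> d"
    and drop_i: "shift_diff s (shift_diff 1 g) i \<le> 0" and rise: "0 < shift_diff 1 g d"
  shows "shift_diff s (shift_diff 1 g) d \<le> 0"
proof -
  define F where "F = shift_diff 1 g"
  have F_pos: "0 < F k" if "0 < k" "k \<le> d" for k
  proof (rule ccontr)
    assume "\<not> 0 < F k"
    then have "g k \<le> g (k - 1)" using that by (simp add: F_def shift_diff_def)
    then have "g d \<le> g (d - 1)" using nonincreasing_after_dropD[OF g] that by blast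
    with rise that show False by (simp add: shift_diff_def)
  qed
  have hder_F: "hder g 1 k = F k" if "k \<le> d" for k
    using F_pos[of k] that \<open>g 0 = 1\<close> by (auto simp: F_def shift_diff_def)
  have "s \<le> i"
    using drop_i[folded F_def] F_pos[of i] assms(4,5) by (auto simp: shift_diff_def split: if_splits)
  have "1 < g 1" using F_pos[of 1] assms(3-5) by (simp add: F_def shift_diff_def)
  then have "nonincreasing_after_drop (hder g 1)" by (rule g1)
  moreover have "hder g 1 i \<le> hder g 1 (i - s)"
    using drop_i[folded F_def] \<open>s \<le> i\<close> hder_F[of i] hder_F[of "i - s"] \<open>i \<le> d\<close>
    by (simp add: shift_diff_def)
  ultimately have "hder g 1 d \<le> hder g 1 (d - s)"
    by (rule nonincreasing_after_drop_shift_le[OF _ \<open>0 < i\<close> \<open>i \<le> d\<close>])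
  then show ?thesis
    using \<open>s \<le> i\<close> \<open>i \<le> d\<close> hder_F[of d] hder_F[of "d - s"]
    unfolding F_def[symmetric] by (simp add: shift_diff_def)
qed

lemma shift_diff_drop_propagates:
  fixes g :: "nat \<Rightarrow> 'a::linordered_idom"
  assumes unimodal: "unimodal_each_tail g" and "g 0 = 1" "0 < i" "i \<le> d"
    and drop_i: "shift_diff s g i \<le> shift_diff s g (i - 1)" and "0 < shift_diff s g d"
  shows "shift_diff s g d \<le> shift_diff s g (d - 1)"
proof -
  have g: "nonincreasing_after_drop g"
    using unimodal_each_tail_nonincreasing_after_drop[OF unimodal, of 0] by simp
  have g1: "nonincreasing_after_drop (hder g 1)" if "1 < g 1"
    using unimodal_each_tail_nonincreasing_after_drop[OF unimodal, of 1] that by simp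
  have diff: "shift_diff s g k - shift_diff s g (k - 1) = shift_diff s (shift_diff 1 g) k"
    if "0 < k" for k
    using that shift_diff_commute[of s 1 g k] by (simp add: shift_diff_def[of "Suc 0"])
  have drop_i': "shift_diff s (shift_diff 1 g) i \<le> 0" using drop_i diff[of i] \<open>0 < i\<close> by simp
  have "shift_diff s (shift_diff 1 g) d \<le> 0"
  proof (cases "shift_diff 1 g d \<le> 0")
    case True
    then show ?thesis
      using shift_diff_first_diff_nonpos_at_fall[OF g _ \<open>0 < shift_diff s g d\<close>] \<open>g 0 = 1\<close> by simp
  next
    case False
    then show ?thesis
      using shift_diff_first_diff_nonpos_at_rise[OF g g1 \<open>g 0 = 1\<close> \<open>0 < i\<close> \<open>i \<le> d\<close> drop_i'] by simp
  qed
  then show ?thesis using diff[of d] assms(3,4) by simp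
qed

lemma trunc_shift_diff_drop_propagates:
  fixes G :: "nat \<Rightarrow> 'a::linordered_idom"
  assumes unimodal: "unimodal_each_tail (trunc_seq G)" and "G 0 = 1" "0 < s" "0 < i" "i \<le> d"
    and drop_i: "trunc_seq (shift_diff s G) i \<le> trunc_seq (shift_diff s G) (i - 1)"
  shows "trunc_seq (shift_diff s G) d \<le> trunc_seq (shift_diff s G) (d - 1)"
proof (cases "\<forall>j\<le>d. 0 < shift_diff s G j")
  case True
  have "G j = trunc_seq G j" if "j \<le> d" for j
    using pos_of_shift_diff_pos[OF \<open>0 < s\<close> True] that by (simp add: trunc_seq_eq)
  then have H: "shift_diff s G j = shift_diff s (trunc_seq G) j" if "j \<le> d" for j
    using that by (intro shift_diff_cong) simp
  have trunc_H: "trunc_seq (shift_diff s G) j = shift_diff s (trunc_seq G) j" if "j \<le> d" for j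
    using True that H by (simp add: trunc_seq_eq)
  have "trunc_seq G 0 = 1" using \<open>G 0 = 1\<close> by (simp add: trunc_seq_eq)
  then have "shift_diff s (trunc_seq G) d \<le> shift_diff s (trunc_seq G) (d - 1)"
    using shift_diff_drop_propagates[OF unimodal] drop_i True[rule_format, of d] assms(4,5) H[of d]
    by (simp add: trunc_H)
  then show ?thesis by (simp add: trunc_H)
qed (simp add: trunc_seq_eq_0 trunc_seq_nonneg)

lemma hder_one_trunc_seq:
  fixes H :: "nat \<Rightarrow> 'a::linordered_idom"
  assumes "H 0 = 1"
    and propagates: "\<And>j d. 0 < j \<Longrightarrow> j \<le> d \<Longrightarrow> trunc_seq H j \<le> trunc_seq H (j - 1) \<Longrightarrow>
      trunc_seq H d \<le> trunc_seq H (d - 1)"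
  shows "hder (trunc_seq H) 1 = trunc_seq (shift_diff 1 H)"
proof
  fix k
  show "hder (trunc_seq H) 1 k = trunc_seq (shift_diff 1 H) k"
  proof (cases "\<forall>j\<le>k. 0 < shift_diff 1 H j")
    case True
    then have "\<forall>j\<le>k. 0 < H j" using pos_of_shift_diff_pos[of 1] by auto
    with True \<open>H 0 = 1\<close> show ?thesis by (auto simp: trunc_seq_eq shift_diff_def)
  next
    case False
    then obtain j where j: "j \<le> k" "shift_diff 1 H j \<le> 0" by auto
    with \<open>H 0 = 1\<close> have "0 < j" by (cases j) (auto simp: shift_diff_def)
    with j have "trunc_seq H j \<le> trunc_seq H (j - 1)"
      by (intro trunc_seq_drop) (simp_all add: shift_diff_def)
    then have "trunc_seq H k \<le> trunc_seq H (k - 1)" using propagates \<open>0 < j\<close> j by blast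
    with False \<open>0 < j\<close> j show ?thesis by (simp add: trunc_seq_eq_0)
  qed
qed

lemma froberg_series_nth_0:
  assumes "\<forall>d\<in>set ds. 0 < d"
  shows "froberg_series n ds $ 0 = 1"
proof -
  from assms have "(\<Prod>d\<leftarrow>ds. 1 - fps_X ^ d :: rat fps) $ 0 = 1" by (induction ds) auto
  then show ?thesis by (simp add: froberg_series_def fps_power_zeroth)
qed

lemma froberg_series_snoc:
  "froberg_series n (ds @ [s]) = (1 - fps_X ^ s) * froberg_series n ds"
  by (simp add: froberg_series_def algebra_simps)

lemma froberg_series_Suc:
  "froberg_series n ds = (1 - fps_X) * froberg_series (Suc n) ds"
proof -
  have "(1 - fps_X :: rat fps) * inverse (1 - fps_X) = 1"
    by (rule inverse_mult_eq_1') simp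
  then have "(1 - fps_X :: rat fps) * inverse ((1 - fps_X) ^ Suc n) = inverse ((1 - fps_X) ^ n)"
    by (simp add: fps_inverse_mult mult.assoc[symmetric])
  then show ?thesis unfolding froberg_series_def by (simp add: mult.left_commute)
qed

theorem lemma4p5:
  fixes n :: nat and ds :: "nat list" and s :: nat and i :: nat
  assumes "\<forall>d\<in>set ds. d > 0"
    and "s > 0"
    and "unimodal_each_tail (froberg n ds)"
    and "i > 0"
    and "froberg n (ds @ [s]) i \<le> froberg n (ds @ [s]) (i - 1)"
  shows "(\<forall>d\<ge>i. froberg n (ds @ [s]) d \<le> froberg n (ds @ [s]) (d - 1))
       \<and> (n \<ge> 1 \<longrightarrow> hder (froberg n (ds @ [s])) 1 = froberg (n - 1) (ds @ [s]))"
proof -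
  define G where "G = fps_nth (froberg_series n ds)"
  define H where "H = fps_nth (froberg_series n (ds @ [s]))"
  have H_eq: "H = shift_diff s G"
    by (rule ext) (simp add: H_def G_def froberg_series_snoc fps_nth_one_minus_X_power_mult)
  have froberg_H: "froberg n (ds @ [s]) = trunc_seq H" by (simp add: froberg_def H_def)
  have propagates: "trunc_seq H d \<le> trunc_seq H (d - 1)"
    if "0 < j" "j \<le> d" "trunc_seq H j \<le> trunc_seq H (j - 1)" for j d
    using trunc_shift_diff_drop_propagates[of G s j d] assms(1-3) that
    by (simp add: H_eq G_def froberg_def froberg_series_nth_0)
  have "hder (trunc_seq H) 1 = froberg (n - 1) (ds @ [s])" if "1 \<le> n"
  proof -
    from that obtain m where n: "n = Suc m" by (cases n) auto
    have "H 0 = 1" using assms(1,2) by (simp add: H_def froberg_series_nth_0)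
    moreover have "froberg (n - 1) (ds @ [s]) = trunc_seq (shift_diff 1 H)"
      by (simp add: froberg_def H_def n froberg_series_Suc[of m]
          fps_nth_one_minus_X_power_mult[of 1, simplified])
    ultimately show ?thesis using hder_one_trunc_seq propagates by metis
  qed
  then show ?thesis using propagates assms(4,5) froberg_H by auto
qed

end
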